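(* Let $K$ be an algebraically closed field with $\operatorname{char}K\neq 3$, let $\varepsilon$ be a primitive cube root of $1$, and let $p\in K\langle x_1,\dots,x_m\rangle$ be a multilinear polynomial which on $M_3(K)$ is neither a polynomial identity nor a central polynomial. Then every $3$-scalar matrix in $M_3(K)$ (i.e. every matrix with eigenvalues $\gamma,\gamma\varepsilon,\gamma\varepsilon^2$ for some $\gamma\in K$, including all nilpotent matrices) belongs to $\operatorname{Im} p$.
   Context: A polynomial is multilinear if it has the form $\sum_{\sigma\in S_m}c_\sigma x_{\sigma(1)}\cdots x_{\sigma(m)}$. $p$ is a polynomial identity of $M_3(K)$ if all its values are $0$, and a central polynomial if all its values are scalar matrices but it is not a polynomial identity. *)

theory Defs
  imports "HOL-Analysis.Analysis" "HOL-Computational_Algebra.Polynomial"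
begin

text \<open>Evaluation of the multilinear polynomial
  p = sum over sigma in S_m of c sigma * x_sigma(0) ... x_sigma(m-1)
  (variables indexed 0..m-1) at a tuple of 3x3 matrices A 0, ..., A (m-1).\<close>
definition mlin_eval :: "nat \<Rightarrow> ((nat \<Rightarrow> nat) \<Rightarrow> 'a::field) \<Rightarrow> (nat \<Rightarrow> 'a^3^3) \<Rightarrow> 'a^3^3" where
  "mlin_eval m c A =
     (\<Sum>\<sigma> \<in> {\<sigma>. \<sigma> permutes {..<m}}.
        (\<chi> i j. c \<sigma> * (foldr (\<lambda>k B. A (\<sigma> k) ** B) [0..<m] (mat 1)) $ i $ j))"

definition is_PI :: "nat \<Rightarrow> ((nat \<Rightarrow> nat) \<Rightarrow> 'a::field) \<Rightarrow> bool" where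
  "is_PI m c \<longleftrightarrow> (\<forall>A :: nat \<Rightarrow> 'a^3^3. mlin_eval m c A = 0)"

definition is_central :: "nat \<Rightarrow> ((nat \<Rightarrow> nat) \<Rightarrow> 'a::field) \<Rightarrow> bool" where
  "is_central m c \<longleftrightarrow> (\<forall>A :: nat \<Rightarrow> 'a^3^3. \<exists>s. mlin_eval m c A = mat s) \<and> \<not> is_PI m c"

definition image_poly :: "nat \<Rightarrow> ((nat \<Rightarrow> nat) \<Rightarrow> 'a::field) \<Rightarrow> ('a^3^3) set" where
  "image_poly m c = range (mlin_eval m c)"

definition charpoly3 :: "'a::field^3^3 \<Rightarrow> 'a poly" where
  "charpoly3 M = det (\<chi> i j. (if i = j then [:0, 1:] else 0) - [: M $ i $ j :])"

definition three_scalar :: "'a::field \<Rightarrow> 'a^3^3 \<Rightarrow> bool" where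
  "three_scalar eps M \<longleftrightarrow> (\<exists>\<gamma>. charpoly3 M = (\<Prod>k<3. [: -(\<gamma> * eps ^ k), 1 :]))"

end

theory Submission
  imports Defs
begin

text \<open>
  The image of a multilinear p is closed under conjugation and under scaling (scale one variable),
  and a 3-scalar matrix is determined up to similarity and scaling by its type: invertible ones
  are diagonalisable with eigenvalues \<open>\<gamma>, \<gamma>\<epsilon>, \<gamma>\<epsilon>\<^sup>2\<close>, nilpotent ones are classified by their rank.
  So it suffices to find in the image one matrix of each type.

  Since p is multilinear and not central, some value at matrix units is not diagonal. Conjugating by
  diagonal matrices shows that a value \<open>p(e\<^sub>a\<^sub>1\<^sub>b\<^sub>1, \<dots>)\<close> is a multiple of the single unit
  \<open>e\<^sub>r\<^sub>s\<close> with \<open>r - s = \<Sum>(a\<^sub>k - b\<^sub>k)\<close> in \<open>\<int>/3\<close>; this gives the rank one nilpotent.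
  Rewriting each unit in the clock-and-shift basis yields a nonzero value which is an eigenvector
  for conjugation by the clock and by the shift matrix, hence supported on one cyclic diagonal
  with no zero entry there: its characteristic polynomial is \<open>t\<^sup>3 - d\<close>, \<open>d \<noteq> 0\<close>.
  Finally, interpolating between two unit substitutions whose values occupy different entries,
  chosen at minimal Hamming distance, gives a sum of two such units, a nilpotent of rank two.
\<close>


section \<open>Multilinear evaluation\<close>

definition scale_mat :: "'a::times \<Rightarrow> 'a^'n^'m \<Rightarrow> 'a^'n^'m" where
  "scale_mat a F = (\<chi> i j. a * F $ i $ j)"

lemma scale_mat_nth [simp]: "scale_mat a F $ i $ j = a * F $ i $ j"
  by (simp add: scale_mat_def)

lemma scale_mat_scale_mat [simp]:
  "scale_mat a (scale_mat b F) = scale_mat (a * b) (F :: 'a::semigroup_mult^'n^'m)"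
  by (simp add: vec_eq_iff mult.assoc)

lemma scale_mat_one [simp]: "scale_mat 1 F = (F :: 'a::monoid_mult^'n^'m)"
  by (simp add: vec_eq_iff)

lemma scale_mat_zero_left [simp]: "scale_mat 0 F = (0 :: 'a::mult_zero^'n^'m)"
  by (simp add: vec_eq_iff)

lemma scale_mat_zero_right [simp]: "scale_mat a 0 = (0 :: 'a::mult_zero^'n^'m)"
  by (simp add: vec_eq_iff)

lemma scale_mat_add_right:
  "scale_mat a (F + G) = scale_mat a F + scale_mat a (G :: 'a::semiring^'n^'m)"
  by (simp add: vec_eq_iff algebra_simps)

lemma scale_mat_sum_right:
  "scale_mat a (sum f S) = (\<Sum>x\<in>S. scale_mat a (f x :: 'a::semiring_0^'n^'m))"
  by (induction S rule: infinite_finite_induct) (auto simp: scale_mat_add_right)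

lemma scale_mat_mult_left:
  "scale_mat a F ** G = scale_mat a (F ** G :: 'a::comm_semiring_1^'n^'m)"
  by (simp add: vec_eq_iff matrix_matrix_mult_def sum_distrib_left mult.assoc)

lemma scale_mat_mult_right:
  "F ** scale_mat a G = scale_mat a (F ** G :: 'a::comm_semiring_1^'n^'m)"
  by (simp add: vec_eq_iff matrix_matrix_mult_def sum_distrib_left algebra_simps)

lemma scale_mat_mat: "scale_mat a (mat b) = mat (a * b :: 'a::mult_zero)"
  by (simp add: vec_eq_iff mat_def)

lemma matrix_add_rdistrib: "(A + B) ** C = A ** C + B ** (C :: 'a::semiring_1^'n^'m)"
  by (simp add: vec_eq_iff matrix_matrix_mult_def sum.distrib algebra_simps)

lemma matrix_mul_zero_left [simp]: "0 ** (C :: 'a::semiring_1^'n^'m) = 0"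
  by (simp add: vec_eq_iff matrix_matrix_mult_def)

lemma matrix_mul_zero_right [simp]: "(C :: 'a::semiring_1^'n^'m) ** 0 = 0"
  by (simp add: vec_eq_iff matrix_matrix_mult_def)

lemma matrix_mul_sum_left: "sum f S ** (C :: 'a::semiring_1^'n^'m) = (\<Sum>x\<in>S. f x ** C)"
  by (induction S rule: infinite_finite_induct) (auto simp: matrix_add_rdistrib)

lemma matrix_mul_sum_right: "(C :: 'a::semiring_1^'n^'m) ** sum f S = (\<Sum>x\<in>S. C ** f x)"
  by (induction S rule: infinite_finite_induct) (auto simp: matrix_add_ldistrib)

definition monomial_prod :: "(nat \<Rightarrow> 'a::semiring_1^'n^'n) \<Rightarrow> (nat \<Rightarrow> nat) \<Rightarrow> nat list \<Rightarrow> 'a^'n^'n"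
  where "monomial_prod A \<sigma> xs = foldr (\<lambda>k B. A (\<sigma> k) ** B) xs (mat 1)"

lemma monomial_prod_Nil [simp]: "monomial_prod A \<sigma> [] = mat 1"
  by (simp add: monomial_prod_def)

lemma monomial_prod_Cons [simp]: "monomial_prod A \<sigma> (x # xs) = A (\<sigma> x) ** monomial_prod A \<sigma> xs"
  by (simp add: monomial_prod_def)

lemma monomial_prod_cong:
  "(\<And>x. x \<in> set xs \<Longrightarrow> A (\<sigma> x) = B (\<sigma> x)) \<Longrightarrow> monomial_prod A \<sigma> xs = monomial_prod B \<sigma> xs"
  by (induction xs) auto

lemma monomial_prod_conj:
  assumes "G ** H = mat 1" "H ** G = mat 1"
  shows "monomial_prod (\<lambda>k. G ** A k ** H) \<sigma> xs = G ** monomial_prod A \<sigma> xs ** H"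
proof (induction xs)
  case Nil
  then show ?case using assms by simp
next
  case (Cons x xs)
  have "G ** A (\<sigma> x) ** H ** (G ** monomial_prod A \<sigma> xs ** H)
      = G ** A (\<sigma> x) ** (H ** G) ** monomial_prod A \<sigma> xs ** H"
    by (simp add: matrix_mul_assoc)
  then show ?case using Cons assms by (simp add: matrix_mul_assoc)
qed

lemma monomial_prod_scale:
  "monomial_prod (\<lambda>k. scale_mat (s k) (A k)) \<sigma> xs
     = scale_mat (prod_list (map (s \<circ> \<sigma>) xs)) (monomial_prod A \<sigma> (xs :: nat list) :: 'a::comm_semiring_1^'n^'n)"
  by (induction xs) (auto simp: scale_mat_mult_left scale_mat_mult_right mult.commute)

lemma monomial_prod_add:
  assumes "distinct xs" "inj_on \<sigma> (set xs)" "k \<in> \<sigma> ` set xs"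
  shows "monomial_prod (A(k := U + V)) \<sigma> xs
       = monomial_prod (A(k := U)) \<sigma> xs + monomial_prod (A(k := V)) \<sigma> xs"
  using assms unfolding fun_upd_def
proof (induction xs)
  case Nil
  then show ?case by simp
next
  case (Cons x xs)
  show ?case
  proof (cases "\<sigma> x = k")
    case True
    then have "k \<notin> \<sigma> ` set xs" using Cons.prems by auto
    then have "monomial_prod (\<lambda>j. if j = k then W else A j) \<sigma> xs = monomial_prod A \<sigma> xs" for W
      by (intro monomial_prod_cong) auto
    then show ?thesis using True by (simp add: matrix_add_rdistrib)
  next
    case False
    then show ?thesis using Cons by (simp add: matrix_add_ldistrib)
  qed
qed

lemma mlin_eval_monomials:
  "mlin_eval m c A = (\<Sum>\<sigma>\<in>{\<sigma>. \<sigma> permutes {..<m}}. scale_mat (c \<sigma>) (monomial_prod A \<sigma> [0..<m]))"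
  by (simp add: mlin_eval_def scale_mat_def monomial_prod_def)

lemma mlin_eval_cong:
  assumes "\<And>k. k < m \<Longrightarrow> A k = B k"
  shows "mlin_eval m c A = mlin_eval m c B"
  unfolding mlin_eval_monomials
proof (intro sum.cong refl)
  fix \<sigma> assume "\<sigma> \<in> {\<sigma>. \<sigma> permutes {..<m}}"
  then have "monomial_prod A \<sigma> [0..<m] = monomial_prod B \<sigma> [0..<m]"
    using assms permutes_in_image by (intro monomial_prod_cong) fastforce
  then show "scale_mat (c \<sigma>) (monomial_prod A \<sigma> [0..<m]) = scale_mat (c \<sigma>) (monomial_prod B \<sigma> [0..<m])"
    by simp
qed

lemma mlin_eval_conj:
  assumes "G ** H = mat 1" "H ** G = mat 1"
  shows "mlin_eval m c (\<lambda>k. G ** A k ** H) = G ** mlin_eval m c A ** H"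
  unfolding mlin_eval_monomials matrix_mul_sum_left matrix_mul_sum_right
  by (simp add: monomial_prod_conj[OF assms] scale_mat_mult_left scale_mat_mult_right)

lemma prod_list_permutes:
  assumes "\<sigma> permutes {..<m}"
  shows "prod_list (map (s \<circ> \<sigma>) [0..<m]) = (\<Prod>k<m. s k)"
proof -
  have "prod_list (map (s \<circ> \<sigma>) [0..<m]) = prod (s \<circ> \<sigma>) {..<m}"
    by (metis distinct_upt prod.distinct_set_conv_list set_upt lessThan_atLeast0)
  also have "\<dots> = prod s (\<sigma> ` {..<m})"
    by (rule prod.reindex[symmetric]) (rule permutes_inj_on[OF assms])
  finally show ?thesis using permutes_image[OF assms] by simp
qed

lemma mlin_eval_scale:
  "mlin_eval m c (\<lambda>k. scale_mat (s k) (A k)) = scale_mat (\<Prod>k<m. s k) (mlin_eval m c A)"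
  unfolding mlin_eval_monomials scale_mat_sum_right
  by (intro sum.cong refl) (simp add: monomial_prod_scale prod_list_permutes mult.commute)

lemma mlin_eval_add:
  assumes "k < m"
  shows "mlin_eval m c (A(k := U + V)) = mlin_eval m c (A(k := U)) + mlin_eval m c (A(k := V))"
  unfolding mlin_eval_monomials sum.distrib[symmetric] scale_mat_add_right[symmetric]
proof (intro sum.cong refl)
  fix \<sigma> assume "\<sigma> \<in> {\<sigma>. \<sigma> permutes {..<m}}"
  then have p: "\<sigma> permutes {..<m}" by simp
  have "k \<in> \<sigma> ` set [0..<m]"
    using permutes_image[OF p] assms by (simp add: lessThan_atLeast0)
  then show "scale_mat (c \<sigma>) (monomial_prod (A(k := U + V)) \<sigma> [0..<m])
      = scale_mat (c \<sigma>) (monomial_prod (A(k := U)) \<sigma> [0..<m] + monomial_prod (A(k := V)) \<sigma> [0..<m])"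
    by (subst monomial_prod_add) (auto intro: permutes_inj_on[OF p])
qed

lemma mlin_eval_scale_one:
  assumes "k < m"
  shows "mlin_eval m c (A(k := scale_mat t U)) = scale_mat t (mlin_eval m c (A(k := U)))"
proof -
  have "mlin_eval m c (A(k := scale_mat t U))
      = mlin_eval m c (\<lambda>j. scale_mat (if j = k then t else 1) ((A(k := U)) j))"
    by (rule mlin_eval_cong) auto
  also have "\<dots> = scale_mat (\<Prod>j<m. if j = k then t else 1) (mlin_eval m c (A(k := U)))"
    by (rule mlin_eval_scale)
  finally show ?thesis using assms by (simp add: prod.delta)
qed

lemma mlin_eval_lincomb:
  assumes "k < m" "finite F"
  shows "mlin_eval m c (A(k := \<Sum>g\<in>F. scale_mat (w g) (B g)))
       = (\<Sum>g\<in>F. scale_mat (w g) (mlin_eval m c (A(k := B g))))"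
  using assms(2)
proof (induction F rule: finite_induct)
  case empty
  then show ?case using mlin_eval_scale_one[OF assms(1), of c A 0 0] by (simp add: fun_upd_def)
next
  case (insert g F)
  then show ?case
    by (simp add: mlin_eval_add[OF assms(1), unfolded fun_upd_def]
        mlin_eval_scale_one[OF assms(1), unfolded fun_upd_def])
qed

lemma mlin_eval_expand_subset:
  assumes "finite D" "D \<subseteq> {..<m}"
  shows "mlin_eval m c (\<lambda>k. if k \<in> D then U k + V k else U k)
       = (\<Sum>T\<in>Pow D. mlin_eval m c (\<lambda>k. if k \<in> T then V k else U k))"
  using assms
proof (induction D arbitrary: U rule: finite_induct)
  case empty
  then show ?case by simp
next
  case (insert x D)
  have xm: "x < m" and Dm: "D \<subseteq> {..<m}" using insert.prems by auto
  define W where "W k = (if k \<in> D then U k + V k else U k)" for k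
  have split: "(\<lambda>k. if k \<in> insert x D then U k + V k else U k) = W(x := U x + V x)"
    using insert.hyps by (auto simp: W_def)
  have "W(x := U x) = (\<lambda>k. if k \<in> D then U k + V k else U k)"
    using insert.hyps by (auto simp: W_def)
  then have without_x:
    "mlin_eval m c (W(x := U x)) = (\<Sum>T\<in>Pow D. mlin_eval m c (\<lambda>k. if k \<in> T then V k else U k))"
    using insert.IH[OF Dm] by simp
  have "W(x := V x) = (\<lambda>k. if k \<in> D then (U(x := V x)) k + V k else (U(x := V x)) k)"
    using insert.hyps by (auto simp: W_def)
  then have "mlin_eval m c (W(x := V x))
      = (\<Sum>T\<in>Pow D. mlin_eval m c (\<lambda>k. if k \<in> T then V k else (U(x := V x)) k))"
    using insert.IH[OF Dm, of "U(x := V x)"] by simp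
  also have "\<dots> = (\<Sum>T\<in>Pow D. mlin_eval m c (\<lambda>k. if k \<in> insert x T then V k else U k))"
    by (intro sum.cong refl arg_cong[where f = "mlin_eval m c"]) auto
  also have "\<dots> = (\<Sum>T\<in>insert x ` Pow D. mlin_eval m c (\<lambda>k. if k \<in> T then V k else U k))"
    by (rule sum.reindex_cong[symmetric]) (use insert.hyps in \<open>auto simp: inj_on_def\<close>)
  finally have with_x: "mlin_eval m c (W(x := V x))
      = (\<Sum>T\<in>insert x ` Pow D. mlin_eval m c (\<lambda>k. if k \<in> T then V k else U k))" .
  have "mlin_eval m c (\<lambda>k. if k \<in> insert x D then U k + V k else U k)
      = mlin_eval m c (W(x := U x)) + mlin_eval m c (W(x := V x))"
    unfolding split by (rule mlin_eval_add[OF xm])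
  also have "\<dots> = (\<Sum>T\<in>Pow D \<union> insert x ` Pow D. mlin_eval m c (\<lambda>k. if k \<in> T then V k else U k))"
    unfolding without_x with_x by (rule sum.union_disjoint[symmetric]) (use insert.hyps in auto)
  also have "Pow D \<union> insert x ` Pow D = Pow (insert x D)"
    by (rule Pow_insert[symmetric])
  finally show ?case .
qed

lemma mlin_eval_two_terms:
  assumes "finite D" "D \<subseteq> {..<m}" "D \<noteq> {}"
    and mixed: "\<And>T. T \<subseteq> D \<Longrightarrow> T \<noteq> {} \<Longrightarrow> T \<noteq> D \<Longrightarrow>
                   mlin_eval m c (\<lambda>k. if k \<in> T then V k else U k) = 0"
  shows "mlin_eval m c (\<lambda>k. if k \<in> D then U k + V k else U k)
       = mlin_eval m c U + mlin_eval m c (\<lambda>k. if k \<in> D then V k else U k)"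
proof -
  have "(\<Sum>T\<in>Pow D. mlin_eval m c (\<lambda>k. if k \<in> T then V k else U k))
      = (\<Sum>T\<in>{{}, D}. mlin_eval m c (\<lambda>k. if k \<in> T then V k else U k))"
    by (rule sum.mono_neutral_right) (use mixed assms(1) in auto)
  then show ?thesis using assms(3) by (simp add: mlin_eval_expand_subset[OF assms(1,2)])
qed

lemma mlin_eval_zero_vars: "mlin_eval 0 c A = mat (c id)"
proof -
  have "{\<sigma>. \<sigma> permutes {..<0::nat}} = {id}" by (auto simp: permutes_empty)
  then show ?thesis by (simp add: mlin_eval_monomials scale_mat_mat)
qed

definition mat_span :: "('i::finite \<Rightarrow> 'a::semiring_1^'n^'m) \<Rightarrow> ('a^'n^'m) set" where
  "mat_span G = {\<Sum>g\<in>UNIV. scale_mat (w g) (G g) | w. True}"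

lemma mat_spanI: "x = (\<Sum>g\<in>UNIV. scale_mat (w g) (G g)) \<Longrightarrow> x \<in> mat_span G"
  unfolding mat_span_def by blast

definition mat_subspace :: "('a::semiring_1^'n^'m) set \<Rightarrow> bool" where
  "mat_subspace V \<longleftrightarrow> 0 \<in> V \<and> (\<forall>x\<in>V. \<forall>y\<in>V. x + y \<in> V) \<and> (\<forall>a. \<forall>x\<in>V. scale_mat a x \<in> V)"

lemma mat_subspace_sum:
  assumes "mat_subspace V" "\<And>x. x \<in> S \<Longrightarrow> f x \<in> V"
  shows "sum f S \<in> V"
  using assms(2)
  by (induction S rule: infinite_finite_induct) (use assms(1) in \<open>auto simp: mat_subspace_def\<close>)

lemma mat_span_generator: "G g \<in> mat_span G"
proof -
  have "(\<Sum>g'\<in>UNIV. scale_mat (if g' = g then 1 else 0) (G g')) = (\<Sum>g'\<in>UNIV. if g' = g then G g' else 0)"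
    by (intro sum.cong) auto
  then have "G g = (\<Sum>g'\<in>UNIV. scale_mat (if g' = g then 1 else 0) (G g'))" by simp
  then show ?thesis by (rule mat_spanI)
qed

lemma mlin_eval_in_subspace_one_var:
  assumes V: "mat_subspace V" and "n < m" and "B n \<in> mat_span G"
    and gens: "\<And>g. mlin_eval m c (B(n := G g)) \<in> V"
  shows "mlin_eval m c B \<in> V"
proof -
  obtain w where "B n = (\<Sum>g\<in>UNIV. scale_mat (w g) (G g))"
    using assms(3) by (auto simp: mat_span_def)
  then have "mlin_eval m c B = mlin_eval m c (B(n := \<Sum>g\<in>UNIV. scale_mat (w g) (G g)))"
    by (metis fun_upd_triv)
  also have "\<dots> = (\<Sum>g\<in>UNIV. scale_mat (w g) (mlin_eval m c (B(n := G g))))"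
    by (rule mlin_eval_lincomb[OF \<open>n < m\<close>]) simp
  also have "\<dots> \<in> V"
    using V gens by (intro mat_subspace_sum) (auto simp: mat_subspace_def)
  finally show ?thesis .
qed

lemma mlin_eval_in_subspace:
  fixes G :: "nat \<Rightarrow> 'i::finite \<Rightarrow> 'a::field^3^3"
  assumes V: "mat_subspace V"
    and span: "\<And>k. k < m \<Longrightarrow> A k \<in> mat_span (G k)"
    and gens: "\<And>f. mlin_eval m c (\<lambda>k. G k (f k)) \<in> V"
  shows "mlin_eval m c A \<in> V"
proof -
  let ?P = "\<lambda>n. \<forall>B. (\<forall>k<m. B k \<in> mat_span (G k)) \<longrightarrow> (\<forall>k<n. B k \<in> range (G k)) \<longrightarrow> mlin_eval m c B \<in> V"
  have "?P n" if "n \<le> m" for n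
    using that
  proof (induction n rule: inc_induct)
    case base
    show ?case
    proof (intro allI impI)
      fix B assume "\<forall>k<m. B k \<in> range (G k)"
      then have "B k = G k (inv (G k) (B k))" if "k < m" for k
        using that by (simp add: f_inv_into_f)
      then have "mlin_eval m c B = mlin_eval m c (\<lambda>k. G k (inv (G k) (B k)))"
        by (rule mlin_eval_cong)
      then show "mlin_eval m c B \<in> V" using gens by simp
    qed
  next
    case (step n)
    show ?case
    proof (intro allI impI)
      fix B assume sp: "\<forall>k<m. B k \<in> mat_span (G k)" and low: "\<forall>k<n. B k \<in> range (G k)"
      show "mlin_eval m c B \<in> V"
      proof (rule mlin_eval_in_subspace_one_var[OF V step.hyps(2)])
        show "B n \<in> mat_span (G n)" using sp step.hyps(2) by blast
        fix g
        have "\<forall>k<m. (B(n := G n g)) k \<in> mat_span (G k)"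
          using sp mat_span_generator[of "G n" g] by simp
        moreover have "\<forall>k<Suc n. (B(n := G n g)) k \<in> range (G k)"
          using low by (simp add: less_Suc_eq)
        ultimately show "mlin_eval m c (B(n := G n g)) \<in> V"
          using step.IH by blast
      qed
    qed
  qed
  from this[of 0] show ?thesis using span by blast
qed


section \<open>Matrix units, diagonal matrices and the cyclic shift\<close>

definition mat_unit :: "'m \<Rightarrow> 'n \<Rightarrow> 'a::zero_neq_one^'n^'m" where
  "mat_unit i j = (\<chi> r s. if r = i \<and> s = j then 1 else 0)"

lemma mat_unit_nth [simp]: "mat_unit i j $ r $ s = (if r = i \<and> s = j then 1 else 0)"
  by (simp add: mat_unit_def)

lemma mat_unit_mult:
  "mat_unit a b ** mat_unit b' d = (if b = b' then mat_unit a d else (0 :: 'a::semiring_1^'n^'m))"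
proof -
  have "(mat_unit a b ** mat_unit b' d :: 'a^'n^'m) $ r $ s
      = (\<Sum>k\<in>UNIV. (if r = a \<and> k = b then 1 else 0) * (if k = b' \<and> s = d then 1 else 0))" for r s
    unfolding matrix_matrix_mult_def by simp
  also have "\<dots> r s = (\<Sum>k\<in>UNIV. if k = b then (if r = a \<and> b = b' \<and> s = d then 1 else 0) else 0)" for r s
    by (intro sum.cong) auto
  finally show ?thesis by (simp add: vec_eq_iff)
qed

lemma mat_in_span_units: "(X :: 'a::semiring_1^'n^'m) \<in> mat_span (\<lambda>p. mat_unit (fst p) (snd p))"
proof -
  have "(\<Sum>p\<in>UNIV. scale_mat (X $ fst p $ snd p) (mat_unit (fst p) (snd p))) $ r $ s
      = (\<Sum>p\<in>UNIV. if p = (r, s) then X $ r $ s else 0)" for r s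
    unfolding sum_component scale_mat_nth mat_unit_nth by (intro sum.cong) auto
  then have "X = (\<Sum>p\<in>UNIV. scale_mat (X $ fst p $ snd p) (mat_unit (fst p) (snd p)))"
    by (simp add: vec_eq_iff)
  then show ?thesis by (rule mat_spanI)
qed

definition diag_mat :: "('n \<Rightarrow> 'a::zero) \<Rightarrow> 'a^'n^'n" where
  "diag_mat t = (\<chi> r s. if r = s then t r else 0)"

lemma diag_mat_nth [simp]: "diag_mat t $ r $ s = (if r = s then t r else 0)"
  by (simp add: diag_mat_def)

lemma diag_mat_mult_nth [simp]: "(diag_mat t ** X) $ r $ s = t r * X $ r $ s"
proof -
  have "(diag_mat t ** X) $ r $ s = (\<Sum>k\<in>UNIV. (if r = k then t r else 0) * X $ k $ s)"
    unfolding matrix_matrix_mult_def by simp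
  also have "\<dots> = (\<Sum>k\<in>UNIV. if k = r then t r * X $ r $ s else 0)"
    by (intro sum.cong) auto
  finally show ?thesis by simp
qed

lemma mult_diag_mat_nth [simp]: "(X ** diag_mat t) $ r $ s = X $ r $ s * t s"
proof -
  have "(X ** diag_mat t) $ r $ s = (\<Sum>k\<in>UNIV. X $ r $ k * (if k = s then t k else 0))"
    unfolding matrix_matrix_mult_def by simp
  also have "\<dots> = (\<Sum>k\<in>UNIV. if k = s then X $ r $ s * t s else 0)"
    by (intro sum.cong) auto
  finally show ?thesis by simp
qed

lemma diag_mat_inverse:
  fixes t :: "'n::finite \<Rightarrow> 'a::field"
  assumes "\<And>x. t x \<noteq> 0"
  shows "diag_mat t ** diag_mat (\<lambda>x. 1 / t x) = mat 1" "diag_mat (\<lambda>x. 1 / t x) ** diag_mat t = mat 1"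
  using assms unfolding vec_eq_iff by (simp_all add: mat_def)

lemma diag_mat_conj_unit:
  "diag_mat t ** mat_unit a b ** diag_mat (\<lambda>x. 1 / t x) = scale_mat (t a / t b) (mat_unit a b :: 'a::field^'n^'n)"
  by (auto simp: vec_eq_iff)

definition is_diag_mat :: "'a::zero^'n^'n \<Rightarrow> bool" where
  "is_diag_mat D \<longleftrightarrow> (\<forall>i j. i \<noteq> j \<longrightarrow> D $ i $ j = 0)"

lemma unipotent_inverse3:
  fixes i j :: 3
  assumes "i \<noteq> j"
  shows "(mat 1 + mat_unit i j) ** (mat 1 - mat_unit i j) = (mat 1 :: 'a::comm_ring_1^3^3)"
    "(mat 1 - mat_unit i j) ** (mat 1 + mat_unit i j) = (mat 1 :: 'a::comm_ring_1^3^3)"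
  using assms exhaust_3[of i] exhaust_3[of j]
  by (auto simp: vec_eq_iff matrix_matrix_mult_def sum_3 mat_def forall_3)

lemma diag_mat_scalar_if_conj_diag:
  fixes D :: "'a::comm_ring_1^3^3"
  assumes "is_diag_mat D"
    and "is_diag_mat ((mat 1 + mat_unit 1 2) ** D ** (mat 1 - mat_unit 1 2))"
    and "is_diag_mat ((mat 1 + mat_unit 2 3) ** D ** (mat 1 - mat_unit 2 3))"
  shows "D = mat (D $ 1 $ 1)"
proof -
  have z: "D$1$2 = 0" "D$1$3 = 0" "D$2$1 = 0" "D$2$3 = 0" "D$3$1 = 0" "D$3$2 = 0"
    using assms(1) unfolding is_diag_mat_def by auto
  have "((mat 1 + mat_unit 1 2) ** D ** (mat 1 - mat_unit 1 2)) $ 1 $ 2 = 0"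
    using assms(2) unfolding is_diag_mat_def by auto
  then have "D$2$2 = D$1$1"
    by (simp add: matrix_matrix_mult_def sum_3 mat_def z)
  moreover have "((mat 1 + mat_unit 2 3) ** D ** (mat 1 - mat_unit 2 3)) $ 2 $ 3 = 0"
    using assms(3) unfolding is_diag_mat_def by auto
  then have "D$3$3 = D$2$2"
    by (simp add: matrix_matrix_mult_def sum_3 mat_def z)
  ultimately show ?thesis
    unfolding vec_eq_iff forall_3 using z by (simp add: mat_def)
qed

definition shift_mat :: "'a::zero_neq_one^3^3" where
  "shift_mat = (\<chi> r s. if r = s + 1 then 1 else 0)"

definition shift_mat_inv :: "'a::zero_neq_one^3^3" where
  "shift_mat_inv = (\<chi> r s. if s = r + 1 then 1 else 0)"

lemma shift_mat_mult_nth [simp]: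
  "(shift_mat ** (X :: 'a::semiring_1^'n::finite^3)) $ r $ s = X $ (r - 1) $ s"
proof -
  have "(shift_mat ** X) $ r $ s = (\<Sum>k\<in>UNIV. (if r = k + 1 then 1 else 0) * X $ k $ s)"
    unfolding matrix_matrix_mult_def shift_mat_def by simp
  also have "\<dots> = (\<Sum>k\<in>UNIV. if k = r - 1 then X $ (r - 1) $ s else 0)"
    by (intro sum.cong) (auto simp: algebra_simps)
  finally show ?thesis by simp
qed

lemma mult_shift_mat_inv_nth [simp]:
  "((X :: 'a::semiring_1^3^'m::finite) ** shift_mat_inv) $ r $ s = X $ r $ (s - 1)"
proof -
  have "(X ** shift_mat_inv) $ r $ s = (\<Sum>k\<in>UNIV. X $ r $ k * (if s = k + 1 then 1 else 0))"
    unfolding matrix_matrix_mult_def shift_mat_inv_def by simp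
  also have "\<dots> = (\<Sum>k\<in>UNIV. if k = s - 1 then X $ r $ (s - 1) else 0)"
    by (intro sum.cong) (auto simp: algebra_simps)
  finally show ?thesis by simp
qed

lemma shift_mat_inverse:
  "shift_mat ** shift_mat_inv = (mat 1 :: 'a::semiring_1^3^3)"
  "shift_mat_inv ** shift_mat = (mat 1 :: 'a::semiring_1^3^3)"
  by (auto simp: vec_eq_iff shift_mat_inv_def shift_mat_def mat_def matrix_matrix_mult_def sum_3 forall_3)

lemma shift_mat_conj_unit:
  "shift_mat ** mat_unit a b ** shift_mat_inv = (mat_unit (a + 1) (b + 1) :: 'a::semiring_1^3^3)"
  by (auto simp: vec_eq_iff algebra_simps)

text \<open>All values at matrix units diagonal would make all values diagonal, by multilinearity, hence
  scalar, since the image is closed under conjugation.\<close>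

lemma exists_off_diagonal_unit_value:
  fixes c :: "(nat \<Rightarrow> nat) \<Rightarrow> 'a::field"
  assumes "\<not> is_PI m c" "\<not> is_central m c"
  obtains a b :: "nat \<Rightarrow> 3" and r s :: 3
  where "r \<noteq> s" "mlin_eval m c (\<lambda>k. mat_unit (a k) (b k)) $ r $ s \<noteq> 0"
proof -
  have "\<exists>f :: nat \<Rightarrow> 3 \<times> 3. \<not> is_diag_mat (mlin_eval m c (\<lambda>k. mat_unit (fst (f k)) (snd (f k))))"
  proof (rule ccontr)
    assume "\<not> ?thesis"
    then have diag: "is_diag_mat (mlin_eval m c A)" for A
      using mlin_eval_in_subspace[of "{D. is_diag_mat D}" m A "\<lambda>k p. mat_unit (fst p) (snd p)" c]
        mat_in_span_units
      by (auto simp: mat_subspace_def is_diag_mat_def)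
    have "is_diag_mat ((mat 1 + mat_unit i j) ** mlin_eval m c A ** (mat 1 - mat_unit i j))"
      if "i \<noteq> j" for A and i j :: 3
      using diag[of "\<lambda>k. (mat 1 + mat_unit i j) ** A k ** (mat 1 - mat_unit i j)"]
      by (simp add: mlin_eval_conj unipotent_inverse3[OF that])
    then have "mlin_eval m c A = mat (mlin_eval m c A $ 1 $ 1)" for A
      using diag_mat_scalar_if_conj_diag[OF diag] by simp
    then show False using assms unfolding is_central_def by metis
  qed
  then obtain f :: "nat \<Rightarrow> 3 \<times> 3" and r s where
    "r \<noteq> s" "mlin_eval m c (\<lambda>k. mat_unit (fst (f k)) (snd (f k))) $ r $ s \<noteq> 0"
    unfolding is_diag_mat_def by blast
  then show thesis using that[of r s "\<lambda>k. fst (f k)" "\<lambda>k. snd (f k)"] by blast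
qed


section \<open>Cube roots of unity indexed by \<open>\<int>/3\<close>\<close>

definition epow :: "'a::monoid_mult \<Rightarrow> 3 \<Rightarrow> 'a" where
  "epow e x = (if x = 1 then e else if x = 2 then e^2 else 1)"

lemma epow_simps [simp]: "epow e 1 = e" "epow e 2 = e^2" "epow e 3 = 1" "epow e 0 = 1"
  by (simp_all add: epow_def)

lemma cube_root_of_unity:
  fixes e :: "'a::field"
  assumes "e^3 = 1" "e \<noteq> 1"
  shows "1 + e + e^2 = 0" "e \<noteq> 0" "e^2 \<noteq> 1" "e^2 \<noteq> e"
proof -
  have "(e - 1) * (1 + e + e^2) = e^3 - 1"
    by (simp add: algebra_simps power2_eq_square power3_eq_cube)
  then show "1 + e + e^2 = 0" using assms by simp
  show "e \<noteq> 0" using assms by auto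
  show "e^2 \<noteq> 1"
  proof
    assume "e^2 = 1"
    then have "e^3 = e" by (simp add: power3_eq_cube power2_eq_square mult.assoc)
    then show False using assms by simp
  qed
  show "e^2 \<noteq> e"
  proof
    assume "e^2 = e"
    then have "e * (e - 1) = 0" by (simp add: algebra_simps power2_eq_square)
    then show False using assms by auto
  qed
qed

lemma epow_add:
  fixes e :: "'a::comm_monoid_mult"
  assumes "e^3 = 1"
  shows "epow e (x + y) = epow e x * epow e y"
proof -
  have "e * e^2 = 1" "e^2 * e = 1" "e^2 * e^2 = e"
    using assms by (simp_all add: power2_eq_square power3_eq_cube mult.assoc)
  then show ?thesis using exhaust_3[of x] exhaust_3[of y]
    by (auto simp: epow_def power2_eq_square)
qed

lemma epow_nonzero: "(e :: 'a::field)^3 = 1 \<Longrightarrow> epow e x \<noteq> 0"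
  by (auto simp: epow_def)

lemma epow_inj:
  fixes e :: "'a::field"
  assumes "e^3 = 1" "e \<noteq> 1" "epow e x = epow e y"
  shows "x = (y :: 3)"
  using cube_root_of_unity[OF assms(1,2)] assms(3) exhaust_3[of x] exhaust_3[of y]
  by (auto simp: epow_def)

lemma epow_sum:
  fixes e :: "'a::comm_monoid_mult"
  assumes "e^3 = 1"
  shows "(\<Prod>k\<in>S. epow e (f k)) = epow e (\<Sum>k\<in>S. f k)"
  by (induction S rule: infinite_finite_induct) (auto simp: epow_add[OF assms])

lemma epow_diff:
  fixes e :: "'a::field"
  assumes "e^3 = 1"
  shows "epow e x / epow e y = epow e (x - y)"
  using epow_add[OF assms, of "x - y" y] epow_nonzero[OF assms, of y] by simp


section \<open>Values at matrix units are single entries\<close>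

lemma unit_value_weight:
  fixes c :: "(nat \<Rightarrow> nat) \<Rightarrow> 'a::field" and t :: "3 \<Rightarrow> 'a"
  assumes "\<And>x. t x \<noteq> 0" "mlin_eval m c (\<lambda>k. mat_unit (a k) (b k)) $ r $ s \<noteq> 0"
  shows "t r / t s = (\<Prod>k<m. t (a k) / t (b k))"
proof -
  let ?P = "mlin_eval m c (\<lambda>k. mat_unit (a k) (b k))"
  have "diag_mat t ** ?P ** diag_mat (\<lambda>x. 1 / t x)
      = mlin_eval m c (\<lambda>k. diag_mat t ** mat_unit (a k) (b k) ** diag_mat (\<lambda>x. 1 / t x))"
    by (rule mlin_eval_conj[symmetric]) (rule diag_mat_inverse[OF assms(1)])+
  also have "\<dots> = scale_mat (\<Prod>k<m. t (a k) / t (b k)) ?P"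
    by (simp add: diag_mat_conj_unit mlin_eval_scale)
  finally have "t r * ?P $ r $ s / t s = (\<Prod>k<m. t (a k) / t (b k)) * ?P $ r $ s"
    by (metis (no_types, lifting) diag_mat_mult_nth mult_diag_mat_nth scale_mat_nth times_divide_eq_right mult_1_right)
  then show ?thesis using assms(2) assms(1)[of s] by (simp add: field_simps)
qed

lemma unit_value_index_diff:
  fixes c :: "(nat \<Rightarrow> nat) \<Rightarrow> 'a::field" and e :: 'a
  assumes e: "e^3 = 1" "e \<noteq> 1"
    and nz: "mlin_eval m c (\<lambda>k. mat_unit (a k) (b k)) $ r $ s \<noteq> 0"
  shows "r - s = (\<Sum>k<m. a k - b k)"
proof -
  have "epow e r / epow e s = (\<Prod>k<m. epow e (a k) / epow e (b k))"
    by (rule unit_value_weight[OF epow_nonzero[OF e(1)] nz])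
  then have "epow e (r - s) = epow e (\<Sum>k<m. a k - b k)"
    by (simp add: epow_diff[OF e(1)] epow_sum[OF e(1)])
  then show ?thesis using epow_inj[OF e] by blast
qed

text \<open>Weighting a single index \<open>l\<close> by a primitive cube root separates the positions \<open>(r, s)\<close>
  with \<open>r \<noteq> s\<close>.\<close>

lemma unit_value_single_entry:
  fixes c :: "(nat \<Rightarrow> nat) \<Rightarrow> 'a::field" and e :: 'a
  assumes e: "e^3 = 1" "e \<noteq> 1"
    and nz: "mlin_eval m c (\<lambda>k. mat_unit (a k) (b k)) $ r $ s \<noteq> 0"
    and nz': "mlin_eval m c (\<lambda>k. mat_unit (a k) (b k)) $ r' $ s' \<noteq> 0"
    and rs: "r \<noteq> s"
  shows "r' = r \<and> s' = s"
proof -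
  define t where "t l x = (if x = l then e else 1)" for l x :: 3
  have ef: "e \<noteq> 0" "e * e \<noteq> 1" using cube_root_of_unity[OF e] by (auto simp: power2_eq_square)
  have "t l x \<noteq> 0" for l x using ef by (simp add: t_def)
  then have eq: "t l r / t l s = t l r' / t l s'" for l
    using unit_value_weight[OF _ nz] unit_value_weight[OF _ nz'] by metis
  have "r' = r"
  proof (rule ccontr)
    assume "r' \<noteq> r"
    then show False using eq[of r] rs ef by (cases "s' = r") (auto simp: t_def field_simps)
  qed
  moreover have "s' = s"
  proof (rule ccontr)
    assume "s' \<noteq> s"
    then show False using eq[of s] rs ef \<open>r' = r\<close> by (cases "s' = r") (auto simp: t_def field_simps)
  qed
  ultimately show ?thesis by simp
qed

lemma unit_value_eq_scaled_unit:
  fixes c :: "(nat \<Rightarrow> nat) \<Rightarrow> 'a::field" and e :: 'a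
  assumes "e^3 = 1" "e \<noteq> 1"
    and "mlin_eval m c (\<lambda>k. mat_unit (a k) (b k)) $ r $ s \<noteq> 0" and "r \<noteq> s"
  shows "mlin_eval m c (\<lambda>k. mat_unit (a k) (b k))
       = scale_mat (mlin_eval m c (\<lambda>k. mat_unit (a k) (b k)) $ r $ s) (mat_unit r s)"
  using unit_value_single_entry[OF assms(1-3) _ assms(4)] by (auto simp: vec_eq_iff)


section \<open>Characteristic polynomials of 3 by 3 matrices\<close>

definition principal_minors2 :: "'a::comm_ring_1^3^3 \<Rightarrow> 'a" where
  "principal_minors2 N = N$1$1 * N$2$2 - N$1$2 * N$2$1 + N$1$1 * N$3$3 - N$1$3 * N$3$1
                       + N$2$2 * N$3$3 - N$2$3 * N$3$2"

lemma trace_3: "trace (N :: 'a::semiring_1^3^3) = N$1$1 + N$2$2 + N$3$3"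
  by (simp add: trace_def sum_3)

lemma poly_charpoly3:
  "poly (charpoly3 N) x = x^3 - trace N * x^2 + principal_minors2 N * x - det N"
  unfolding charpoly3_def det_3 trace_3 principal_minors2_def
  by (simp add: algebra_simps power2_eq_square power3_eq_cube)

lemma det_mat_minus:
  "det (mat x - N) = x^3 - trace N * x^2 + principal_minors2 N * x - det (N :: 'a::comm_ring_1^3^3)"
  unfolding det_3 trace_3 principal_minors2_def
  by (simp add: mat_def algebra_simps power2_eq_square power3_eq_cube)

lemma cayley_hamilton3:
  "N ** N ** N = scale_mat (trace N) (N ** N) - scale_mat (principal_minors2 N) N + mat (det N)"
  for N :: "'a::comm_ring_1^3^3"
  unfolding vec_eq_iff forall_3 trace_3 principal_minors2_def det_3
  by (simp add: matrix_matrix_mult_def sum_3 mat_def algebra_simps)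

lemma three_scalar_invariants:
  fixes e :: "'a::field" and M :: "'a^3^3"
  assumes e: "e^3 = 1" "e \<noteq> 1" and "three_scalar e M"
  obtains \<gamma> where "trace M = 0" "principal_minors2 M = 0" "det M = \<gamma>^3"
proof -
  obtain \<gamma> where \<gamma>: "charpoly3 M = (\<Prod>k<3. [: -(\<gamma> * e ^ k), 1 :])"
    using assms(3) unfolding three_scalar_def by blast
  have ef: "1 + e + e^2 = 0" using cube_root_of_unity[OF e] by simp
  have P: "x^3 - trace M * x^2 + principal_minors2 M * x - det M = x^3 - \<gamma>^3" for x
  proof -
    have "x^3 - trace M * x^2 + principal_minors2 M * x - det M = (\<Prod>k<3. x - \<gamma> * e ^ k)"
      by (simp add: poly_charpoly3[symmetric] \<gamma> poly_prod)
    also have "\<dots> = x^3 - \<gamma> * (1 + e + e^2) * x^2 + \<gamma>^2 * e * (1 + e + e^2) * x - \<gamma>^3 * e^3"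
      by (simp add: numeral_3_eq_3 lessThan_Suc algebra_simps power2_eq_square power3_eq_cube)
    finally show ?thesis using ef e(1) by simp
  qed
  have d: "det M = \<gamma>^3" using P[of 0] by simp
  have c: "principal_minors2 M = trace M" using P[of 1] d by (simp add: algebra_simps)
  have "trace M * (e * (1 - e)) = 0"
    using P[of e] d c by (simp add: algebra_simps power2_eq_square)
  then have "trace M = 0" using e cube_root_of_unity(2)[OF e] by simp
  then show thesis using that c d by simp
qed


section \<open>A value with characteristic polynomial \<open>t\<^sup>3 - d\<close>, \<open>d \<noteq> 0\<close>\<close>

definition clock_shift :: "'a::semiring_1 \<Rightarrow> 3 \<Rightarrow> 3 \<Rightarrow> 'a^3^3" where
  "clock_shift e \<alpha> \<beta> = (\<chi> r s. if r = s + \<beta> then epow e (\<alpha> * s) else 0)"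

lemma clock_shift_nth [simp]: "clock_shift e \<alpha> \<beta> $ r $ s = (if r = s + \<beta> then epow e (\<alpha> * s) else 0)"
  by (simp add: clock_shift_def)

lemma sum_epow:
  fixes e :: "'a::field"
  assumes e: "e^3 = 1" "e \<noteq> 1"
  shows "(\<Sum>\<alpha>\<in>UNIV. epow e (\<alpha> * d)) = (if d = 0 then 3 else 0)"
proof -
  have ef: "1 + e + e^2 = 0" using cube_root_of_unity[OF e] by simp
  have n: "(4::3) = 1" "(6::3) = 0" "(9::3) = 0" by simp_all
  consider "d = 1" | "d = 2" | "d = 3" using exhaust_3 by blast
  then show ?thesis by cases (use ef in \<open>simp_all add: sum_3 add_ac n\<close>)
qed

lemma mat_unit_in_clock_shift_span:
  fixes e :: "'a::field"
  assumes e: "e^3 = 1" "e \<noteq> 1" and three: "(3::'a) \<noteq> 0"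
  shows "mat_unit (i + \<beta>) i \<in> mat_span (\<lambda>\<alpha>. clock_shift e \<alpha> \<beta>)"
proof (rule mat_spanI)
  have "(\<Sum>\<alpha>\<in>UNIV. scale_mat (epow e (- (\<alpha> * i)) / 3) (clock_shift e \<alpha> \<beta>)) $ r $ s
      = mat_unit (i + \<beta>) i $ r $ s" for r s
  proof -
    have "(\<Sum>\<alpha>\<in>UNIV. scale_mat (epow e (- (\<alpha> * i)) / 3) (clock_shift e \<alpha> \<beta>)) $ r $ s
        = (\<Sum>\<alpha>\<in>UNIV. if r = s + \<beta> then epow e (\<alpha> * (s - i)) / 3 else 0)"
      unfolding sum_component scale_mat_nth clock_shift_nth
      by (intro sum.cong refl) (simp add: epow_add[OF e(1), symmetric] algebra_simps)
    also have "\<dots> = (if r = s + \<beta> then (\<Sum>\<alpha>\<in>UNIV. epow e (\<alpha> * (s - i))) / 3 else 0)"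
      by (simp add: sum_divide_distrib)
    also have "\<dots> = mat_unit (i + \<beta>) i $ r $ s"
      using three by (auto simp: sum_epow[OF e] add.commute)
    finally show ?thesis .
  qed
  then show "mat_unit (i + \<beta>) i = (\<Sum>\<alpha>\<in>UNIV. scale_mat (epow e (- (\<alpha> * i)) / 3) (clock_shift e \<alpha> \<beta>))"
    by (simp add: vec_eq_iff)
qed

lemma clock_conj_clock_shift:
  fixes e :: "'a::field"
  assumes "e^3 = 1"
  shows "diag_mat (epow e) ** clock_shift e \<alpha> \<beta> ** diag_mat (\<lambda>x. 1 / epow e x)
       = scale_mat (epow e \<beta>) (clock_shift e \<alpha> \<beta>)"
proof -
  have "epow e (s + \<beta>) * epow e (\<alpha> * s) * (1 / epow e s) = epow e \<beta> * epow e (\<alpha> * s)" for s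
    using epow_nonzero[OF assms, of s] by (simp add: epow_add[OF assms])
  then show ?thesis by (auto simp: vec_eq_iff)
qed

lemma shift_conj_clock_shift:
  fixes e :: "'a::field"
  assumes "e^3 = 1"
  shows "shift_mat ** clock_shift e \<alpha> \<beta> ** shift_mat_inv = scale_mat (epow e (- \<alpha>)) (clock_shift e \<alpha> \<beta>)"
proof -
  have "epow e (\<alpha> * (s - 1)) = epow e (- \<alpha>) * epow e (\<alpha> * s)" for s
    by (simp add: epow_add[OF assms, symmetric] algebra_simps)
  moreover have "r - 1 = s - 1 + \<beta> \<longleftrightarrow> r = s + \<beta>" for r s :: 3
    by (auto simp: algebra_simps)
  ultimately show ?thesis by (simp add: vec_eq_iff)
qed

lemma cyclic_diagonal_invariants:
  fixes X :: "'a::field^3^3"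
  assumes "B \<noteq> 0" and support: "\<And>x y. X $ x $ y \<noteq> 0 \<Longrightarrow> x = y + B"
    and full: "\<And>y. X $ (y + B) $ y \<noteq> 0"
  shows "trace X = 0" "principal_minors2 X = 0" "det X \<noteq> 0"
proof -
  have n: "(4::3) = 1" "(5::3) = 2" by simp_all
  have zero: "X $ x $ y = 0" if "x \<noteq> y + B" for x y using support that by blast
  consider "B = 1" | "B = 2" using exhaust_3[of B] assms(1) by auto
  then have "trace X = 0 \<and> principal_minors2 X = 0 \<and> det X \<noteq> 0"
  proof cases
    case 1
    then show ?thesis using full[of 1] full[of 2] full[of 3] zero
      by (simp add: n trace_3 principal_minors2_def det_3)
  next
    case 2
    then show ?thesis using full[of 1] full[of 2] full[of 3] zero
      by (simp add: n trace_3 principal_minors2_def det_3)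
  qed
  then show "trace X = 0" "principal_minors2 X = 0" "det X \<noteq> 0" by auto
qed

lemma exists_nonzero_clock_shift_value:
  fixes c :: "(nat \<Rightarrow> nat) \<Rightarrow> 'a::field" and e :: 'a
  assumes e: "e^3 = 1" "e \<noteq> 1" and three: "(3::'a) \<noteq> 0"
    and nz: "mlin_eval m c (\<lambda>k. mat_unit (a k) (b k)) \<noteq> 0"
  obtains f where "mlin_eval m c (\<lambda>k. clock_shift e (f k) (a k - b k)) \<noteq> 0"
proof -
  have "mat_unit (a k) (b k) \<in> mat_span (\<lambda>\<alpha>. clock_shift e \<alpha> (a k - b k))" for k
    using mat_unit_in_clock_shift_span[OF e three, of "b k" "a k - b k"] by simp
  then show thesis
    using mlin_eval_in_subspace[of "{0}" m "\<lambda>k. mat_unit (a k) (b k)" "\<lambda>k \<alpha>. clock_shift e \<alpha> (a k - b k)" c]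
      nz that by (force simp: mat_subspace_def)
qed

text \<open>The value at clock-and-shift matrices is an eigenvector for conjugation by the clock
  (so it is supported on one cyclic diagonal) and by the shift (so that diagonal has no zeros).\<close>

lemma exists_value_cubic_charpoly:
  fixes c :: "(nat \<Rightarrow> nat) \<Rightarrow> 'a::field" and e :: 'a
  assumes e: "e^3 = 1" "e \<noteq> 1" and three: "(3::'a) \<noteq> 0"
    and nz: "mlin_eval m c (\<lambda>k. mat_unit (a k) (b k)) $ r $ s \<noteq> 0" and "r \<noteq> s"
  obtains A where "trace (mlin_eval m c A) = 0" "principal_minors2 (mlin_eval m c A) = 0"
    "det (mlin_eval m c A) \<noteq> 0"
proof -
  define d where "d k = a k - b k" for k
  define B where "B = (\<Sum>k<m. d k)"
  have "B \<noteq> 0" using unit_value_index_diff[OF e nz] \<open>r \<noteq> s\<close> by (auto simp: B_def d_def)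
  have "mlin_eval m c (\<lambda>k. mat_unit (a k) (b k)) \<noteq> 0" using nz by auto
  then obtain f where "mlin_eval m c (\<lambda>k. clock_shift e (f k) (d k)) \<noteq> 0"
    unfolding d_def by (rule exists_nonzero_clock_shift_value[OF e three])
  define X where "X = mlin_eval m c (\<lambda>k. clock_shift e (f k) (d k))"
  have "diag_mat (epow e) ** X ** diag_mat (\<lambda>x. 1 / epow e x)
      = mlin_eval m c (\<lambda>k. diag_mat (epow e) ** clock_shift e (f k) (d k) ** diag_mat (\<lambda>x. 1 / epow e x))"
    unfolding X_def by (rule mlin_eval_conj[symmetric]) (rule diag_mat_inverse[OF epow_nonzero[OF e(1)]])+
  also have "\<dots> = scale_mat (epow e B) X"
    by (simp add: clock_conj_clock_shift[OF e(1)] mlin_eval_scale X_def epow_sum[OF e(1)] B_def)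
  finally have clock_conj: "diag_mat (epow e) ** X ** diag_mat (\<lambda>x. 1 / epow e x) = scale_mat (epow e B) X" .
  have support: "x = y + B" if "X $ x $ y \<noteq> 0" for x y
  proof -
    have "epow e x / epow e y * X $ x $ y = epow e B * X $ x $ y"
      using arg_cong[OF clock_conj, of "\<lambda>M. M $ x $ y"] by simp
    then have "epow e (x - y) = epow e B" using that by (simp add: epow_diff[OF e(1)])
    then have "x - y = B" by (rule epow_inj[OF e])
    then show ?thesis by (simp add: algebra_simps)
  qed
  define \<rho> where "\<rho> = (\<Prod>k<m. epow e (- f k))"
  have "\<rho> \<noteq> 0" unfolding \<rho>_def using epow_nonzero[OF e(1)] by (simp add: prod_zero_iff)
  have "shift_mat ** X ** shift_mat_inv = mlin_eval m c (\<lambda>k. shift_mat ** clock_shift e (f k) (d k) ** shift_mat_inv)"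
    unfolding X_def by (rule mlin_eval_conj[symmetric]) (rule shift_mat_inverse)+
  also have "\<dots> = scale_mat \<rho> X"
    by (simp add: shift_conj_clock_shift[OF e(1)] mlin_eval_scale X_def \<rho>_def)
  finally have shift_conj: "shift_mat ** X ** shift_mat_inv = scale_mat \<rho> X" .
  have shift: "X $ (x - 1) $ (y - 1) = \<rho> * X $ x $ y" for x y
    using arg_cong[OF shift_conj, of "\<lambda>M. M $ x $ y"] by simp
  have "X \<noteq> 0" unfolding X_def by fact
  then obtain x0 y0 where "X $ x0 $ y0 \<noteq> 0" by (auto simp: vec_eq_iff)
  then have nz0: "X $ (y0 + B) $ y0 \<noteq> 0" using support by force
  have nz1: "X $ (y0 - 1 + B) $ (y0 - 1) \<noteq> 0"
    using shift[of "y0 + B" y0] nz0 \<open>\<rho> \<noteq> 0\<close> by (simp add: algebra_simps)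
  have nz2: "X $ (y0 - 1 - 1 + B) $ (y0 - 1 - 1) \<noteq> 0"
    using shift[of "y0 - 1 + B" "y0 - 1"] nz1 \<open>\<rho> \<noteq> 0\<close> by (simp add: algebra_simps)
  have "X $ (y + B) $ y \<noteq> 0" for y
  proof -
    have "y = y0 \<or> y = y0 - 1 \<or> y = y0 - 1 - 1"
      using exhaust_3[of y] exhaust_3[of y0] by (elim disjE) simp_all
    then show ?thesis using nz0 nz1 nz2 by auto
  qed
  from cyclic_diagonal_invariants[OF \<open>B \<noteq> 0\<close> support this] show thesis
    using that unfolding X_def by blast
qed


section \<open>A nilpotent value of rank two\<close>

lemma nilpotent_two_units:
  fixes \<kappa> \<kappa>' :: "'a::field" and B s s' :: 3
  assumes "B \<noteq> 0" "\<kappa> \<noteq> 0" "\<kappa>' \<noteq> 0" "s \<noteq> s'"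
  defines "N \<equiv> scale_mat \<kappa> (mat_unit (s + B) s) + scale_mat \<kappa>' (mat_unit (s' + B) s')"
  shows "N ** N ** N = 0" "N ** N \<noteq> 0"
proof -
  have "B = 1 \<or> B = 2" using assms(1) exhaust_3[of B] by auto
  then have "N ** N ** N = 0 \<and> N ** N \<noteq> 0"
    using exhaust_3[of s] exhaust_3[of s'] assms(2-4) unfolding N_def
    by (elim disjE) (simp_all add: vec_eq_iff forall_3 matrix_matrix_mult_def sum_3)
  then show "N ** N ** N = 0" "N ** N \<noteq> 0" by auto
qed

definition cyclic_unit_value :: "nat \<Rightarrow> ((nat \<Rightarrow> nat) \<Rightarrow> 'a::field) \<Rightarrow> (nat \<Rightarrow> 3) \<Rightarrow> (nat \<Rightarrow> 3) \<Rightarrow> 'a^3^3"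
  where "cyclic_unit_value m c d i = mlin_eval m c (\<lambda>k. mat_unit (i k + d k) (i k))"

text \<open>Among pairs of unit substitutions whose values are nonzero and occupy different entries,
  one at minimal Hamming distance has all intermediate substitutions with value zero: a nonzero
  intermediate value would differ in position from one of the two ends, giving a closer pair.\<close>

lemma exists_separated_unit_values:
  fixes c :: "(nat \<Rightarrow> nat) \<Rightarrow> 'a::field" and e :: 'a and d i0 :: "nat \<Rightarrow> 3"
  assumes e: "e^3 = 1" "e \<noteq> 1"
    and nz: "mlin_eval m c (\<lambda>k. mat_unit (i0 k + d k) (i0 k)) $ r $ s \<noteq> 0" and rs: "r \<noteq> s"
  obtains i i' where "cyclic_unit_value m c d i \<noteq> 0" "cyclic_unit_value m c d i' \<noteq> 0"
    "\<And>x y. cyclic_unit_value m c d i $ x $ y = 0 \<or> cyclic_unit_value m c d i' $ x $ y = 0"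
    and "\<And>T. T \<subseteq> {k. k < m \<and> i k \<noteq> i' k} \<Longrightarrow> T \<noteq> {} \<Longrightarrow> T \<noteq> {k. k < m \<and> i k \<noteq> i' k} \<Longrightarrow>
           cyclic_unit_value m c d (\<lambda>k. if k \<in> T then i' k else i k) = 0"
proof -
  define V where "V = cyclic_unit_value m c d"
  have diff: "x - y = (\<Sum>k<m. d k)" if "V i $ x $ y \<noteq> 0" for i x y
    using unit_value_index_diff[OF e that[unfolded V_def cyclic_unit_value_def]] by simp
  have single: "x' = x \<and> y' = y" if "V i $ x $ y \<noteq> 0" "V i $ x' $ y' \<noteq> 0" "x \<noteq> y" for i x y x' y'
    using unit_value_single_entry[OF e that[unfolded V_def cyclic_unit_value_def]] .
  have nz_V: "V i0 $ r $ s \<noteq> 0" using nz by (simp add: V_def cyclic_unit_value_def)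
  have off_diag: "x \<noteq> y" if "V i $ x $ y \<noteq> 0" for i x y
    using diff[OF that] diff[OF nz_V] rs by auto
  define separated where
    "separated i i' \<longleftrightarrow> V i \<noteq> 0 \<and> V i' \<noteq> 0 \<and> (\<forall>x y. V i $ x $ y = 0 \<or> V i' $ x $ y = 0)" for i i'
  have separated_if_moved: "separated i i'"
    if "V i $ x $ y \<noteq> 0" "V i' $ x' $ y' \<noteq> 0" "(x', y') \<noteq> (x, y)" for i i' x y x' y'
    using that single[OF that(1) _ off_diag[OF that(1)]] single[OF that(2) _ off_diag[OF that(2)]]
    unfolding separated_def by (metis vec_eq_iff zero_index prod.inject)
  have "separated i0 (\<lambda>k. i0 k + 1)"
  proof -
    have "V (\<lambda>k. i0 k + 1) = shift_mat ** V i0 ** shift_mat_inv"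
      unfolding V_def cyclic_unit_value_def
      by (subst mlin_eval_conj[OF shift_mat_inverse, symmetric]) (simp add: shift_mat_conj_unit algebra_simps)
    then have "V (\<lambda>k. i0 k + 1) $ (r + 1) $ (s + 1) \<noteq> 0" using nz_V by simp
    then show ?thesis by (rule separated_if_moved[OF nz_V]) simp
  qed
  define dist where "dist ii = card {k. k < m \<and> fst ii k \<noteq> snd ii k}" for ii :: "(nat \<Rightarrow> 3) \<times> (nat \<Rightarrow> 3)"
  obtain i i' where sep: "separated i i'"
    and closest: "\<And>j j'. separated j j' \<Longrightarrow> dist (i, i') \<le> dist (j, j')"
    using ex_has_least_nat[of "\<lambda>ii. separated (fst ii) (snd ii)" "(i0, \<lambda>k. i0 k + 1)" dist]
      \<open>separated i0 _\<close> by auto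
  define D where "D = {k. k < m \<and> i k \<noteq> i' k}"
  have "V (\<lambda>k. if k \<in> T then i' k else i k) = 0" if T: "T \<subseteq> D" "T \<noteq> {}" "T \<noteq> D" for T
  proof (rule ccontr)
    let ?j = "\<lambda>k. if k \<in> T then i' k else i k"
    assume "V ?j \<noteq> 0"
    then obtain u v where uv: "V ?j $ u $ v \<noteq> 0" by (auto simp: vec_eq_iff)
    obtain x y where xy: "V i $ x $ y \<noteq> 0" using sep unfolding separated_def by (auto simp: vec_eq_iff)
    obtain x' y' where xy': "V i' $ x' $ y' \<noteq> 0" using sep unfolding separated_def by (auto simp: vec_eq_iff)
    have "finite D" by (simp add: D_def)
    have "dist (i, ?j) = card T"
      unfolding dist_def using T by (intro arg_cong[where f = card]) (auto simp: D_def)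
    moreover have "card T < card D"
      using T \<open>finite D\<close> by (simp add: psubset_card_mono)
    moreover have "dist (?j, i') = card (D - T)"
      unfolding dist_def using T by (intro arg_cong[where f = card]) (auto simp: D_def)
    moreover have "card (D - T) < card D"
      using T \<open>finite D\<close> by (metis Diff_subset card_Diff_subset card_gt_0_iff diff_less finite_subset subset_empty)
    moreover have "dist (i, i') = card D" by (simp add: dist_def D_def)
    moreover have "(x', y') \<noteq> (x, y)" using sep xy xy' unfolding separated_def by auto
    then have "separated i ?j \<or> separated ?j i'"
      using separated_if_moved[OF xy uv] separated_if_moved[OF uv xy'] by auto
    ultimately show False using closest by fastforce
  qed
  then show thesis using that sep unfolding separated_def D_def V_def by blast
qed

lemma exists_value_nilpotent_rank2:
  fixes c :: "(nat \<Rightarrow> nat) \<Rightarrow> 'a::field" and e :: 'a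
  assumes e: "e^3 = 1" "e \<noteq> 1"
    and nz: "mlin_eval m c (\<lambda>k. mat_unit (a k) (b k)) $ r $ s \<noteq> 0" and "r \<noteq> s"
  obtains A where "mlin_eval m c A ** mlin_eval m c A ** mlin_eval m c A = 0"
    "mlin_eval m c A ** mlin_eval m c A \<noteq> 0"
proof -
  define d where "d k = a k - b k" for k
  define V where "V = cyclic_unit_value m c d"
  define B where "B = (\<Sum>k<m. d k)"
  have nz': "mlin_eval m c (\<lambda>k. mat_unit (b k + d k) (b k)) $ r $ s \<noteq> 0"
    using nz unfolding d_def by simp
  obtain i i' where nz_i: "V i \<noteq> 0" and nz_i': "V i' \<noteq> 0"
    and separated: "\<And>x y. V i $ x $ y = 0 \<or> V i' $ x $ y = 0"
    and mixed: "\<And>T. T \<subseteq> {k. k < m \<and> i k \<noteq> i' k} \<Longrightarrow> T \<noteq> {} \<Longrightarrow> T \<noteq> {k. k < m \<and> i k \<noteq> i' k} \<Longrightarrow>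
                   V (\<lambda>k. if k \<in> T then i' k else i k) = 0"
    using exists_separated_unit_values[OF e nz' \<open>r \<noteq> s\<close>] unfolding V_def by blast
  have diff: "x = y + B" if "V j $ x $ y \<noteq> 0" for j x y
    using unit_value_index_diff[OF e that[unfolded V_def cyclic_unit_value_def]] by (simp add: B_def algebra_simps)
  have "B \<noteq> 0" using diff[of b r s] nz' \<open>r \<noteq> s\<close> by (auto simp: V_def cyclic_unit_value_def)
  have scaled_unit: "V j = scale_mat (V j $ (y + B) $ y) (mat_unit (y + B) y)" if "V j $ x $ y \<noteq> 0" for j x y
    using unit_value_eq_scaled_unit[OF e that[unfolded V_def cyclic_unit_value_def]] diff[OF that] \<open>B \<noteq> 0\<close>
    by (simp add: V_def cyclic_unit_value_def)
  obtain x y where xy: "V i $ x $ y \<noteq> 0" using nz_i by (auto simp: vec_eq_iff)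
  obtain x' y' where xy': "V i' $ x' $ y' \<noteq> 0" using nz_i' by (auto simp: vec_eq_iff)
  have "y \<noteq> y'" using separated[of x y] xy xy' diff[OF xy] diff[OF xy'] by auto
  define D where "D = {k. k < m \<and> i k \<noteq> i' k}"
  have "D \<noteq> {}"
  proof
    assume "D = {}"
    then have "V i = V i'" unfolding V_def cyclic_unit_value_def by (intro mlin_eval_cong) (auto simp: D_def)
    then show False using separated[of x y] xy by simp
  qed
  define E where "E j k = (mat_unit (j k + d k) (j k) :: 'a^3^3)" for j k
  define A where "A k = (if k \<in> D then E i k + E i' k else E i k)" for k
  have "mlin_eval m c A = mlin_eval m c (E i) + mlin_eval m c (\<lambda>k. if k \<in> D then E i' k else E i k)"
    unfolding A_def
  proof (rule mlin_eval_two_terms)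
    show "mlin_eval m c (\<lambda>k. if k \<in> T then E i' k else E i k) = 0"
      if "T \<subseteq> D" "T \<noteq> {}" "T \<noteq> D" for T
      using mixed[of T] that unfolding D_def V_def E_def cyclic_unit_value_def by (simp add: if_distrib cong: if_cong)
  qed (use \<open>D \<noteq> {}\<close> in \<open>auto simp: D_def\<close>)
  also have "mlin_eval m c (\<lambda>k. if k \<in> D then E i' k else E i k) = V i'"
    unfolding V_def E_def cyclic_unit_value_def by (intro mlin_eval_cong) (auto simp: D_def)
  also have "mlin_eval m c (E i) = V i" by (simp add: V_def E_def[abs_def] cyclic_unit_value_def)
  finally have A_eq: "mlin_eval m c A
      = scale_mat (V i $ (y + B) $ y) (mat_unit (y + B) y) + scale_mat (V i' $ (y' + B) $ y') (mat_unit (y' + B) y')"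
    using scaled_unit[OF xy] scaled_unit[OF xy'] by simp
  have "V i $ (y + B) $ y \<noteq> 0" "V i' $ (y' + B) $ y' \<noteq> 0"
    using xy xy' diff[OF xy] diff[OF xy'] by simp_all
  from nilpotent_two_units[OF \<open>B \<noteq> 0\<close> this \<open>y \<noteq> y'\<close>] show thesis
    by (intro that[of A]) (simp_all only: A_eq not_False_eq_True)
qed


section \<open>Similarity classes of 3-scalar matrices\<close>

definition similar_mat :: "'a::semiring_1^'n^'n \<Rightarrow> 'a^'n^'n \<Rightarrow> bool" where
  "similar_mat A B \<longleftrightarrow> (\<exists>P Q. P ** Q = mat 1 \<and> Q ** P = mat 1 \<and> A = P ** B ** Q)"

lemma similar_mat_sym:
  assumes "similar_mat A B"
  shows "similar_mat B A"
proof -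
  obtain P Q where PQ: "P ** Q = mat 1" "Q ** P = mat 1" and A: "A = P ** B ** Q"
    using assms unfolding similar_mat_def by blast
  have "Q ** A ** P = (Q ** P) ** B ** (Q ** P)" by (simp add: A matrix_mul_assoc)
  then show ?thesis unfolding similar_mat_def using PQ by auto
qed

lemma similar_mat_trans:
  assumes "similar_mat A B" "similar_mat B C"
  shows "similar_mat A C"
proof -
  obtain P Q where PQ: "P ** Q = mat 1" "Q ** P = mat 1" and A: "A = P ** B ** Q"
    using assms(1) unfolding similar_mat_def by blast
  obtain P' Q' where PQ': "P' ** Q' = mat 1" "Q' ** P' = mat 1" and B: "B = P' ** C ** Q'"
    using assms(2) unfolding similar_mat_def by blast
  have "(P ** P') ** (Q' ** Q) = P ** (P' ** Q') ** Q" "(Q' ** Q) ** (P ** P') = Q' ** (Q ** P) ** P'"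
    "A = (P ** P') ** C ** (Q' ** Q)"
    by (simp_all add: A B matrix_mul_assoc)
  then show ?thesis unfolding similar_mat_def using PQ PQ' by auto
qed

lemma mat_mult_vector: "mat x *v v = x *s (v :: 'a::semiring_1^'n)"
proof -
  have "(mat x *v v) $ i = (\<Sum>j\<in>UNIV. (if i = j then x else 0) * v $ j)" for i
    by (simp add: matrix_vector_mult_def mat_def)
  also have "\<dots> i = (\<Sum>j\<in>UNIV. if j = i then x * v $ i else 0)" for i
    by (intro sum.cong) auto
  finally show ?thesis by (simp add: vec_eq_iff)
qed

lemma mat_mult_vector_scale: "N *v (a *s v) = a *s (N *v (v :: 'a::comm_ring_1^'n))"
  by (simp add: vec_eq_iff matrix_vector_mult_def sum_distrib_left algebra_simps)

lemma similar_mat_by_basis: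
  fixes N T :: "'a::field^3^3" and v1 v2 v3 :: "'a^3"
  assumes indep: "\<And>a1 a2 a3. a1 *s v1 + a2 *s v2 + a3 *s v3 = 0 \<Longrightarrow> a1 = 0 \<and> a2 = 0 \<and> a3 = 0"
    and c1: "N *v v1 = T$1$1 *s v1 + T$2$1 *s v2 + T$3$1 *s v3"
    and c2: "N *v v2 = T$1$2 *s v1 + T$2$2 *s v2 + T$3$2 *s v3"
    and c3: "N *v v3 = T$1$3 *s v1 + T$2$3 *s v2 + T$3$3 *s v3"
  shows "similar_mat N T"
proof -
  define P :: "'a^3^3" where "P = (\<chi> i j. if j = 1 then v1$i else if j = 2 then v2$i else v3$i)"
  have Pv: "P *v x = x$1 *s v1 + x$2 *s v2 + x$3 *s v3" for x
    by (simp add: P_def vec_eq_iff matrix_vector_mult_def sum_3 algebra_simps)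
  have "inj ((*v) P)"
  proof (rule injI)
    fix x y assume "P *v x = P *v y"
    then have "P *v (x - y) = 0" by (simp add: matrix_vector_mult_diff_distrib)
    then show "x = y" using indep[of "(x - y)$1" "(x - y)$2" "(x - y)$3"]
      unfolding Pv by (simp add: vec_eq_iff forall_3)
  qed
  then obtain Q where Q: "P ** Q = mat 1" "Q ** P = mat 1"
    using det_nz_iff_inj_gen[of "(*v) P"] invertible_det_nz[of P] unfolding invertible_def by auto
  have col: "(N ** P) $ r $ j = (P ** T) $ r $ j" for r j
  proof -
    have "(N ** P) $ r $ j = (N *v (if j = 1 then v1 else if j = 2 then v2 else v3)) $ r"
      by (simp add: P_def matrix_matrix_mult_def matrix_vector_mult_def sum_3)
    moreover have "(P ** T) $ r $ j = v1$r * T$1$j + v2$r * T$2$j + v3$r * T$3$j"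
      by (simp add: P_def matrix_matrix_mult_def sum_3)
    ultimately show ?thesis
      using exhaust_3[of j] c1 c2 c3 by (auto simp: algebra_simps)
  qed
  have "N ** P = P ** T" using col by (simp add: vec_eq_iff)
  have "N = N ** (P ** Q)" using Q by simp
  also have "\<dots> = P ** T ** Q" by (simp add: matrix_mul_assoc \<open>N ** P = P ** T\<close>)
  finally show ?thesis unfolding similar_mat_def using Q by blast
qed

lemma exists_eigenvector:
  fixes N :: "'a::field^'n^'n"
  assumes "det (mat x - N) = 0"
  obtains v where "v \<noteq> 0" "N *v v = x *s v"
proof -
  have "\<not> inj ((*v) (mat x - N))"
    using det_nz_iff_inj_gen[of "(*v) (mat x - N)"] assms by simp
  then obtain y z where "y \<noteq> z" "(mat x - N) *v y = (mat x - N) *v z" by (auto simp: inj_def)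
  then have "y - z \<noteq> 0" "(mat x - N) *v (y - z) = 0"
    by (simp_all add: matrix_vector_mult_diff_distrib)
  moreover have "(mat x - N) *v w = x *s w - N *v w" for w
    by (simp add: matrix_vector_mult_diff_rdistrib mat_mult_vector)
  ultimately show thesis using that[of "y - z"] by simp
qed

lemma eigenvector_coefficient_zero:
  fixes N :: "'a::field^'n^'n"
  assumes "N *v v1 = l1 *s v1" "N *v v2 = l2 *s v2" "N *v v3 = l3 *s v3"
    and "v1 \<noteq> 0" "l1 \<noteq> l2" "l1 \<noteq> l3"
    and z: "a1 *s v1 + a2 *s v2 + a3 *s v3 = 0"
  shows "a1 = 0"
proof -
  have z1: "(a1 * l1) *s v1 + (a2 * l2) *s v2 + (a3 * l3) *s v3 = 0"
    using arg_cong[OF z, of "\<lambda>x. N *v x"] assms(1-3)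
    by (simp add: matrix_vector_right_distrib mat_mult_vector_scale vector_smult_assoc)
  have z2: "(a1 * l1 * l1) *s v1 + (a2 * l2 * l2) *s v2 + (a3 * l3 * l3) *s v3 = 0"
    using arg_cong[OF z1, of "\<lambda>x. N *v x"] assms(1-3)
    by (simp add: matrix_vector_right_distrib mat_mult_vector_scale vector_smult_assoc)
  have "a1 * (l1 - l2) * (l1 - l3) * v1 $ r = 0" for r
  proof -
    \<comment> \<open>apply \<open>(N - l\<^sub>2)(N - l\<^sub>3)\<close> to the relation\<close>
    have "a1 * (l1 - l2) * (l1 - l3) * v1 $ r
        = (a1 * l1 * l1 * v1$r + a2 * l2 * l2 * v2$r + a3 * l3 * l3 * v3$r)
          - (l2 + l3) * (a1 * l1 * v1$r + a2 * l2 * v2$r + a3 * l3 * v3$r)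
          + l2 * l3 * (a1 * v1$r + a2 * v2$r + a3 * v3$r)"
      by (simp add: algebra_simps)
    then show ?thesis
      using arg_cong[OF z, of "\<lambda>x. x $ r"] arg_cong[OF z1, of "\<lambda>x. x $ r"]
        arg_cong[OF z2, of "\<lambda>x. x $ r"] by simp
  qed
  then have "a1 * v1 $ r = 0" for r using assms(5,6) by simp
  moreover obtain r where "v1 $ r \<noteq> 0" using assms(4) by (auto simp: vec_eq_iff)
  ultimately show ?thesis by auto
qed

lemma similar_diag_cube_roots:
  fixes N :: "'a::field^3^3" and e \<mu> :: 'a
  assumes e: "e^3 = 1" "e \<noteq> 1"
    and N: "trace N = 0" "principal_minors2 N = 0" "det N = \<mu>^3" and "\<mu> \<noteq> 0"
  shows "similar_mat N (diag_mat (\<lambda>i. \<mu> * epow e i))"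
proof -
  have ef: "e^2 \<noteq> 1" "e^2 \<noteq> e" using cube_root_of_unity[OF e] by auto
  have "epow e i ^ 3 = 1" for i
  proof -
    have "e^6 = (e^3)^2" by (simp flip: power_mult)
    then show ?thesis using exhaust_3[of i] e(1) by (auto simp flip: power_mult)
  qed
  then have "det (mat (\<mu> * epow e i) - N) = 0" for i
    using N by (simp add: det_mat_minus power_mult_distrib)
  then obtain v1 v2 v3 where v1: "v1 \<noteq> 0" "N *v v1 = (\<mu> * epow e 1) *s v1"
    and v2: "v2 \<noteq> 0" "N *v v2 = (\<mu> * epow e 2) *s v2"
    and v3: "v3 \<noteq> 0" "N *v v3 = (\<mu> * epow e 3) *s v3"
    using exists_eigenvector by metis
  have d12: "\<mu> * epow e 1 \<noteq> \<mu> * epow e 2" and d13: "\<mu> * epow e 1 \<noteq> \<mu> * epow e 3"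
    and d23: "\<mu> * epow e 2 \<noteq> \<mu> * epow e 3"
    using ef e(2) \<open>\<mu> \<noteq> 0\<close> by auto
  show ?thesis
  proof (rule similar_mat_by_basis[of v1 v2 v3])
    fix a1 a2 a3 assume z: "a1 *s v1 + a2 *s v2 + a3 *s v3 = 0"
    have "a1 = 0" by (rule eigenvector_coefficient_zero[OF v1(2) v2(2) v3(2) v1(1) d12 d13 z])
    moreover have "a2 = 0"
      by (rule eigenvector_coefficient_zero[OF v2(2) v1(2) v3(2) v2(1) d12[symmetric] d23, of a2 a1 a3])
        (use z in \<open>simp add: add_ac\<close>)
    moreover have "a3 = 0"
      by (rule eigenvector_coefficient_zero[OF v3(2) v1(2) v2(2) v3(1) d13[symmetric] d23[symmetric],
            of a3 a1 a2])
        (use z in \<open>simp add: add_ac\<close>)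
    ultimately show "a1 = 0 \<and> a2 = 0 \<and> a3 = 0" by simp
  qed (simp_all add: v1 v2 v3)
qed

lemma similar_jordan3:
  fixes N :: "'a::field^3^3"
  assumes "N ** N ** N = 0" and "N ** N \<noteq> 0"
  shows "similar_mat N (mat_unit 1 2 + mat_unit 2 3)"
proof -
  obtain v where "N *v (N *v v) \<noteq> 0"
    using assms(2) by (metis matrix_vector_mul_assoc matrix_eq matrix_vector_mult_0)
  define v1 where "v1 = N *v (N *v v)"
  define v2 where "v2 = N *v v"
  have "v1 \<noteq> 0" by (simp add: v1_def \<open>N *v (N *v v) \<noteq> 0\<close>)
  have Nv1: "N *v v1 = 0"
    using assms(1) by (simp add: v1_def matrix_vector_mul_assoc matrix_mul_assoc)
  have Nv2: "N *v v2 = v1" by (simp add: v1_def v2_def)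
  show ?thesis
  proof (rule similar_mat_by_basis[of v1 v2 v])
    fix a1 a2 a3 assume z: "a1 *s v1 + a2 *s v2 + a3 *s v = 0"
    have "N *v (N *v (a1 *s v1 + a2 *s v2 + a3 *s v)) = a3 *s v1"
      using Nv1 Nv2 by (simp add: matrix_vector_right_distrib mat_mult_vector_scale v1_def v2_def)
    then have a3: "a3 = 0" using z \<open>v1 \<noteq> 0\<close> by (auto simp: vec_eq_iff)
    have "N *v (a1 *s v1 + a2 *s v2 + a3 *s v) = a2 *s v1"
      using Nv1 Nv2 a3 by (simp add: matrix_vector_right_distrib mat_mult_vector_scale)
    then have a2: "a2 = 0" using z \<open>v1 \<noteq> 0\<close> by (auto simp: vec_eq_iff)
    have "a1 = 0" using z a2 a3 \<open>v1 \<noteq> 0\<close> by (auto simp: vec_eq_iff)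
    then show "a1 = 0 \<and> a2 = 0 \<and> a3 = 0" using a2 a3 by simp
  qed (simp_all add: Nv1 Nv2 v2_def[symmetric])
qed

text \<open>The minors are the cyclically ordered cofactors; Cayley--Hamilton expresses the
  adjugate as \<open>N\<^sup>2 - tr N \<sqdot> N + c\<^sub>2 \<sqdot> I\<close>.\<close>

lemma cyclic_cofactor:
  fixes N :: "'a::comm_ring_1^3^3"
  shows "N$(r+1)$(j+1) * N$(r+2)$(j+2) - N$(r+2)$(j+1) * N$(r+1)$(j+2)
       = (N ** N)$j$r - trace N * N$j$r + (if j = r then principal_minors2 N else 0)"
proof -
  have n: "(4::3) = 1" "(5::3) = 2" by simp_all
  show ?thesis
    using exhaust_3[of r] exhaust_3[of j]
    by (elim disjE) (simp_all add: n matrix_matrix_mult_def sum_3 trace_3 principal_minors2_def algebra_simps)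
qed

lemma square_zero_minors:
  fixes N :: "'a::comm_ring_1^3^3"
  assumes "trace N = 0" "principal_minors2 N = 0" "N ** N = 0"
  shows "N$r$j * N$s$k = N$s$j * N$r$k"
proof -
  have c: "N$(r+1)$(j+1) * N$(r+2)$(j+2) = N$(r+2)$(j+1) * N$(r+1)$(j+2)" for r j
    using cyclic_cofactor[of N r j] assms by (auto split: if_splits)
  have n: "(4::3) = 1" "(5::3) = 2" by simp_all
  show ?thesis
    using exhaust_3[of r] exhaust_3[of s] exhaust_3[of j] exhaust_3[of k]
      c[of 1 1] c[of 1 2] c[of 1 3] c[of 2 1] c[of 2 2] c[of 2 3] c[of 3 1] c[of 3 2] c[of 3 3]
    by (elim disjE) (simp_all add: n mult.commute)
qed

lemma similar_unit_of_rank_one: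
  fixes N :: "'a::field^3^3"
  assumes NN: "N ** N = 0" and "N \<noteq> 0"
    and minors: "\<And>r s j k. N$r$j * N$s$k = N$s$j * N$r$k"
  shows "similar_mat N (mat_unit 1 2)"
proof -
  obtain r0 j0 where nz: "N $ r0 $ j0 \<noteq> 0" using \<open>N \<noteq> 0\<close> by (auto simp: vec_eq_iff)
  define ev :: "3 \<Rightarrow> 'a^3" where "ev j = (\<chi> k. if k = j then 1 else 0)" for j
  have N_ev: "(A *v ev j) $ s = A $ s $ j" for A :: "'a^3^3" and s j
  proof -
    have "(A *v ev j) $ s = (\<Sum>k\<in>UNIV. A $ s $ k * (if k = j then 1 else 0))"
      by (simp add: matrix_vector_mult_def ev_def)
    also have "\<dots> = (\<Sum>k\<in>UNIV. if k = j then A $ s $ j else 0)"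
      by (intro sum.cong) auto
    finally show ?thesis by simp
  qed
  define w where "w = N *v ev j0"
  have Nw: "N *v w = 0" using NN by (simp add: w_def matrix_vector_mul_assoc)
  obtain l where l: "l \<noteq> j0" "w $ l \<noteq> 0"
  proof (rule ccontr)
    assume "\<not> thesis"
    then have wl: "\<And>l. l \<noteq> j0 \<Longrightarrow> w $ l = 0" using that by blast
    have "(N *v w) $ r0 = (\<Sum>k\<in>UNIV. N $ r0 $ k * w $ k)"
      by (simp add: matrix_vector_mult_def)
    also have "\<dots> = (\<Sum>k\<in>UNIV. if k = j0 then N $ r0 $ j0 * w $ j0 else 0)"
      by (rule sum.cong) (auto simp: wl)
    finally have "(N *v w) $ r0 = N $ r0 $ j0 * w $ j0" by simp
    then have "N $ r0 $ j0 * w $ j0 = 0" using Nw by simp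
    then show False using nz wl[of r0] by (cases "r0 = j0") (auto simp: w_def N_ev)
  qed
  have "(1::3) \<notin> {j0, l} \<or> (2::3) \<notin> {j0, l} \<or> (3::3) \<notin> {j0, l}"
    using exhaust_3[of j0] exhaust_3[of l] by (elim disjE) simp_all
  then obtain k where k: "k \<noteq> j0" "k \<noteq> l" by blast
  define \<alpha> where "\<alpha> = N $ r0 $ k / N $ r0 $ j0"
  define u where "u = ev k - \<alpha> *s ev j0"
  have Nu: "N *v u = 0"
  proof -
    have "N $ s $ k = \<alpha> * N $ s $ j0" for s
      using minors[of r0 j0 s k] nz by (simp add: \<alpha>_def field_simps)
    then show ?thesis
      by (simp add: vec_eq_iff u_def matrix_vector_mult_diff_distrib mat_mult_vector_scale N_ev)
  qed
  have u: "u $ l = 0" "u $ k = 1" using l k by (auto simp: u_def ev_def)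
  show ?thesis
  proof (rule similar_mat_by_basis[of w "ev j0" u])
    fix a1 a2 a3 assume z: "a1 *s w + a2 *s ev j0 + a3 *s u = 0"
    have "N *v (a1 *s w + a2 *s ev j0 + a3 *s u) = a2 *s w"
      using Nw Nu by (simp add: matrix_vector_right_distrib mat_mult_vector_scale w_def)
    then have a2: "a2 = 0" using z l by (auto simp: vec_eq_iff)
    have "a1 = 0" using arg_cong[OF z, of "\<lambda>x. x $ l"] a2 u l by simp
    moreover have "a3 = 0" using arg_cong[OF z, of "\<lambda>x. x $ k"] a2 u k \<open>a1 = 0\<close> by (simp add: ev_def)
    ultimately show "a1 = 0 \<and> a2 = 0 \<and> a3 = 0" using a2 by simp
  qed (simp_all add: Nw Nu w_def[symmetric])
qed


section \<open>The image of a multilinear polynomial\<close>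

lemma image_poly_conj:
  assumes "X \<in> image_poly m c" "G ** H = mat 1" "H ** G = mat 1"
  shows "G ** X ** H \<in> image_poly m c"
proof -
  obtain A where "X = mlin_eval m c A" using assms(1) unfolding image_poly_def by blast
  then have "G ** X ** H = mlin_eval m c (\<lambda>k. G ** A k ** H)"
    by (simp add: mlin_eval_conj[OF assms(2,3)])
  then show ?thesis unfolding image_poly_def by blast
qed

lemma image_poly_similar:
  assumes "X \<in> image_poly m c" "similar_mat Y X"
  shows "Y \<in> image_poly m c"
  using assms image_poly_conj unfolding similar_mat_def by blast

lemma image_poly_scale:
  assumes "0 < m" "X \<in> image_poly m c"
  shows "scale_mat t X \<in> image_poly m c"
proof -
  obtain A where "X = mlin_eval m c A" using assms(2) unfolding image_poly_def by blast
  moreover have "A(0 := scale_mat t (A 0)) = A(0 := scale_mat t (A 0))" ..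
  then have "mlin_eval m c (A(0 := scale_mat t (A 0))) = scale_mat t (mlin_eval m c A)"
    using mlin_eval_scale_one[OF assms(1), of c A t "A 0"] by simp
  ultimately show ?thesis unfolding image_poly_def by (metis rangeI)
qed

lemma similar_mat_scale:
  assumes "similar_mat A B"
  shows "similar_mat (scale_mat t A) (scale_mat t B :: 'a::comm_semiring_1^'n^'n)"
  using assms unfolding similar_mat_def by (auto simp: scale_mat_mult_left scale_mat_mult_right)

lemma vars_pos_if_noncentral:
  assumes "\<not> is_PI m c" "\<not> is_central m c"
  shows "0 < m"
proof (rule ccontr)
  assume "\<not> 0 < m"
  then have "mlin_eval m c A = mat (c id)" for A by (simp add: mlin_eval_zero_vars)
  then show False using assms unfolding is_central_def by blast
qed

lemma image_poly_contains_invertible_3scalar: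
  fixes c :: "(nat \<Rightarrow> nat) \<Rightarrow> 'a::alg_closed_field" and e :: 'a
  assumes e: "e^3 = 1" "e \<noteq> 1" and three: "(3::'a) \<noteq> 0"
    and "\<not> is_PI m c" "\<not> is_central m c"
    and M: "trace M = 0" "principal_minors2 M = 0" "det M = \<gamma>^3" and "\<gamma> \<noteq> 0"
  shows "M \<in> image_poly m c"
proof -
  obtain a b r s where "r \<noteq> s" and nz: "mlin_eval m c (\<lambda>k. mat_unit (a k) (b k)) $ r $ s \<noteq> 0"
    by (rule exists_off_diagonal_unit_value[OF assms(4,5)])
  obtain A where A: "trace (mlin_eval m c A) = 0" "principal_minors2 (mlin_eval m c A) = 0"
    "det (mlin_eval m c A) \<noteq> 0"
    by (rule exists_value_cubic_charpoly[OF e three nz \<open>r \<noteq> s\<close>])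
  obtain \<mu> where \<mu>: "\<mu>^3 = det (mlin_eval m c A)" using nth_root_exists[of 3 "det (mlin_eval m c A)"] by auto
  then have "\<mu> \<noteq> 0" using A(3) by auto
  have "similar_mat (mlin_eval m c A) (diag_mat (\<lambda>i. \<mu> * epow e i))"
    using similar_diag_cube_roots[OF e A(1,2) \<mu>[symmetric] \<open>\<mu> \<noteq> 0\<close>] .
  moreover have "scale_mat (\<gamma> / \<mu>) (diag_mat (\<lambda>i. \<mu> * epow e i)) = diag_mat (\<lambda>i. \<gamma> * epow e i)"
    using \<open>\<mu> \<noteq> 0\<close> by (simp add: vec_eq_iff)
  ultimately have "similar_mat (scale_mat (\<gamma> / \<mu>) (mlin_eval m c A)) (diag_mat (\<lambda>i. \<gamma> * epow e i))"
    using similar_mat_scale by metis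
  then have "similar_mat M (scale_mat (\<gamma> / \<mu>) (mlin_eval m c A))"
    using similar_diag_cube_roots[OF e M \<open>\<gamma> \<noteq> 0\<close>] similar_mat_sym similar_mat_trans by blast
  moreover have "scale_mat (\<gamma> / \<mu>) (mlin_eval m c A) \<in> image_poly m c"
    by (rule image_poly_scale[OF vars_pos_if_noncentral[OF assms(4,5)]]) (simp add: image_poly_def)
  ultimately show ?thesis by (rule image_poly_similar[rotated])
qed

lemma image_poly_contains_nilpotent_index3:
  fixes c :: "(nat \<Rightarrow> nat) \<Rightarrow> 'a::field" and e :: 'a
  assumes e: "e^3 = 1" "e \<noteq> 1" and "\<not> is_PI m c" "\<not> is_central m c"
    and "M ** M ** M = 0" "M ** M \<noteq> 0"
  shows "M \<in> image_poly m c"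
proof -
  obtain a b r s where "r \<noteq> s" and nz: "mlin_eval m c (\<lambda>k. mat_unit (a k) (b k)) $ r $ s \<noteq> 0"
    by (rule exists_off_diagonal_unit_value[OF assms(3,4)])
  obtain A where "mlin_eval m c A ** mlin_eval m c A ** mlin_eval m c A = 0"
    "mlin_eval m c A ** mlin_eval m c A \<noteq> 0"
    by (rule exists_value_nilpotent_rank2[OF e nz \<open>r \<noteq> s\<close>])
  then have "similar_mat (mlin_eval m c A) (mat_unit 1 2 + mat_unit 2 3)"
    by (rule similar_jordan3)
  then have "similar_mat M (mlin_eval m c A)"
    using similar_jordan3[OF assms(5,6)] similar_mat_sym similar_mat_trans by blast
  then show ?thesis by (rule image_poly_similar[rotated]) (simp add: image_poly_def)
qed

lemma image_poly_contains_square_zero: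
  fixes c :: "(nat \<Rightarrow> nat) \<Rightarrow> 'a::field" and e :: 'a
  assumes e: "e^3 = 1" "e \<noteq> 1" and "\<not> is_PI m c" "\<not> is_central m c"
    and M: "trace M = 0" "principal_minors2 M = 0" "M ** M = 0"
  shows "M \<in> image_poly m c"
proof -
  obtain a b r s where "r \<noteq> s" and nz: "mlin_eval m c (\<lambda>k. mat_unit (a k) (b k)) $ r $ s \<noteq> 0"
    by (rule exists_off_diagonal_unit_value[OF assms(3,4)])
  define U where "U = mlin_eval m c (\<lambda>k. mat_unit (a k) (b k))"
  have U: "U \<in> image_poly m c" unfolding U_def image_poly_def by blast
  show ?thesis
  proof (cases "M = 0")
    case True
    then show ?thesis
      using image_poly_scale[OF vars_pos_if_noncentral[OF assms(3,4)] U, of 0] by simp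
  next
    case False
    have U_unit: "U = scale_mat (U $ r $ s) (mat_unit r s)"
      unfolding U_def by (rule unit_value_eq_scaled_unit[OF e nz \<open>r \<noteq> s\<close>])
    have "U ** U = 0"
      by (subst (1 2) U_unit) (simp add: scale_mat_mult_left scale_mat_mult_right mat_unit_mult \<open>r \<noteq> s\<close>[symmetric])
    moreover have "U \<noteq> 0" using nz unfolding U_def by auto
    moreover have "U $ p $ j * U $ q $ k = U $ q $ j * U $ p $ k" for p q j k
      by (subst (1 2 3 4) U_unit) simp
    ultimately have "similar_mat U (mat_unit 1 2)"
      by (rule similar_unit_of_rank_one)
    then have "similar_mat M U"
      using similar_unit_of_rank_one[OF M(3) False square_zero_minors[OF M]]
        similar_mat_sym similar_mat_trans by blast
    then show ?thesis by (rule image_poly_similar[OF U])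
  qed
qed

theorem lemma3p7:
  fixes \<epsilon> :: "'a::alg_closed_field"
    and m :: nat and c :: "(nat \<Rightarrow> nat) \<Rightarrow> 'a"
    and M :: "'a^3^3"
  assumes "(of_nat 3 :: 'a) \<noteq> 0"
    and "\<epsilon> ^ 3 = 1" and "\<epsilon> \<noteq> 1"
    and "\<not> is_PI m c" and "\<not> is_central m c"
    and "three_scalar \<epsilon> M"
  shows "M \<in> image_poly m c"
proof -
  have e: "\<epsilon>^3 = 1" "\<epsilon> \<noteq> 1" and three: "(3::'a) \<noteq> 0" using assms(1-3) by auto
  obtain \<gamma> where M: "trace M = 0" "principal_minors2 M = 0" "det M = \<gamma>^3"
    using three_scalar_invariants[OF e assms(6)] by blast
  consider "\<gamma> \<noteq> 0" | "\<gamma> = 0" "M ** M \<noteq> 0" | "M ** M = 0" by blast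
  then show ?thesis
  proof cases
    case 1
    then show ?thesis by (rule image_poly_contains_invertible_3scalar[OF e three assms(4,5) M])
  next
    case 2
    then have "M ** M ** M = 0"
      using cayley_hamilton3[of M] M by (simp add: vec_eq_iff mat_def)
    then show ?thesis using image_poly_contains_nilpotent_index3[OF e assms(4,5)] 2 by blast
  next
    case 3
    then show ?thesis by (rule image_poly_contains_square_zero[OF e assms(4,5) M(1,2)])
  qed
qed

end
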